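(* Let $p\geq 2$ be an integer. Then \[ c_0\!\left(\frac{1}{p}\right)=\frac{p(p-1)(p-2)}{\pi}\sum_{k\geq 0}\frac{\left(k+1-\frac{p}{2}\left\lfloor\frac{k}{p}\right\rfloor\right)\left(\left\lfloor\frac{k}{p}\right\rfloor+1\right)}{(k+1)(k+p+1)(k+2)(k+p)} . \]
   Context: For a positive integer $p$ and an integer $q$ with $1\le q\le p-1$ and $\gcd(p,q)=1$, the cotangent sum is $c_0\!\left(\frac{q}{p}\right)=-\sum_{k=1}^{p-1}\frac{k}{p}\cot\frac{\pi k q}{p}$. Here $\lfloor\cdot\rfloor$ is the floor function. *)

theory Defs
  imports "HOL-Analysis.Analysis"
begin

definition c0 :: "nat \<Rightarrow> nat \<Rightarrow> real" where
  "c0 q p = - (\<Sum>k = 1..p - 1. (real k / real p) * cot (pi * real k * real q / real p))"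

end

theory Submission
  imports Defs
begin

text \<open>
  Logarithmic differentiation of Euler's reflection formula gives the partial fraction expansion
  \<pi> cot (\<pi> x) = \<Sum>m\<ge>0. (1/(m + x) - 1/(m + 1 - x)) for non-integral x, whence
  \<pi> c0(1/p) = \<Sum>m\<ge>0. B(m) with B(m) = \<Sum>0<j<p. (p - 2j)/(pm + j).
  On a block k = pm + r (r < p), \<pi> times the summand of the theorem is a rational function of k
  with simple poles at -1, -2, -p, -p-1 and residues depending only on m. Summing these partial
  fractions over the block gives B(m) + T(m) - T(m + 1) for an explicit T with T(m) \<longlonglongrightarrow> T(0).
  So the partial sums over whole blocks tend to \<pi> c0(1/p), and since all summands are
  nonnegative, so does the whole series.
\<close>

text \<open>At integers both sides are 0: Gamma vanishes at its poles, and division by 0 gives 0.\<close>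
lemma Gamma_reflection_real:
  fixes x :: real
  shows "Gamma x * Gamma (1 - x) = pi / sin (pi * x)"
proof -
  have "complex_of_real (Gamma x * Gamma (1 - x)) = complex_of_real (pi / sin (pi * x))"
    using Gamma_reflection_complex[of "complex_of_real x"]
    by (simp flip: Gamma_complex_of_real sin_of_real)
  then show ?thesis by (simp only: of_real_eq_iff)
qed

lemma Digamma_reflection_real:
  fixes x :: real
  assumes "x \<notin> \<int>"
  shows "Digamma (1 - x) - Digamma x = pi * cot (pi * x)"
proof -
  define g where "g y = Gamma y * Gamma (1 - y) * sin (pi * y)" for y :: real
  have "1 - x \<notin> \<int>"
    using assms Ints_diff[OF Ints_1, of "1 - x"] by auto
  with assms have "x \<notin> \<int>\<^sub>\<le>\<^sub>0" "1 - x \<notin> \<int>\<^sub>\<le>\<^sub>0"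
    by (simp_all add: not_in_Ints_imp_not_in_nonpos_Ints)
  then have g': "(g has_real_derivative
      Gamma x * Gamma (1 - x) * (sin (pi * x) * (Digamma x - Digamma (1 - x)) + pi * cos (pi * x))) (at x)"
    unfolding g_def by (auto intro!: derivative_eq_intros simp: algebra_simps)
  have sin_nonzero: "sin (pi * y) \<noteq> 0" if "y \<notin> \<int>" for y
    using that by (auto simp: sin_zero_iff_int2)
  have "open (- \<int> :: real set)"
    by (simp add: open_Compl)
  moreover have "g y = pi" if "y \<in> - \<int>" for y
    using that by (simp add: g_def Gamma_reflection_real sin_nonzero)
  ultimately have "(g has_real_derivative 0) (at x)"
    using assms by (intro has_field_derivative_transform_within_open[OF DERIV_const, of "- \<int>"]) auto
  with g' have "Gamma x * Gamma (1 - x) * (sin (pi * x) * (Digamma x - Digamma (1 - x)) + pi * cos (pi * x)) = 0"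
    by (rule DERIV_unique)
  moreover have "Gamma x \<noteq> 0" "Gamma (1 - x) \<noteq> 0" "sin (pi * x) \<noteq> 0"
    using \<open>x \<notin> \<int>\<^sub>\<le>\<^sub>0\<close> \<open>1 - x \<notin> \<int>\<^sub>\<le>\<^sub>0\<close> assms
    by (auto simp: Gamma_eq_zero_iff sin_nonzero)
  ultimately have "sin (pi * x) * (Digamma x - Digamma (1 - x)) + pi * cos (pi * x) = 0"
    by simp
  with \<open>sin (pi * x) \<noteq> 0\<close> show ?thesis
    by (simp add: cot_def field_simps)
qed

lemma pi_cot_partial_fractions:
  fixes x :: real
  assumes "x \<notin> \<int>"
  shows "(\<lambda>k. 1 / (real k + x) - 1 / (real k + 1 - x)) sums (pi * cot (pi * x))"
proof -
  have Digamma_sums: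
      "(\<lambda>k. inverse (real (Suc k)) - inverse (z + real k)) sums (Digamma z + euler_mascheroni)"
    if "z \<noteq> 0" for z :: real
    using summable_sums[OF summable_Digamma[OF that]] by (simp add: Digamma_def)
  have "x \<noteq> 0" "1 - x \<noteq> 0"
    using assms by auto
  from sums_diff[OF Digamma_sums[OF \<open>1 - x \<noteq> 0\<close>] Digamma_sums[OF \<open>x \<noteq> 0\<close>]]
  show ?thesis
    using Digamma_reflection_real[OF assms] by (simp add: inverse_eq_divide algebra_simps)
qed

lemma sum_lessThan_shift:
  fixes f :: "nat \<Rightarrow> 'a::ab_group_add"
  shows "(\<Sum>r<p. f (n + r + 1)) = (\<Sum>r<p. f (n + r)) - f n + f (n + p)"
  using sum.lessThan_Suc_shift[of "\<lambda>r. f (n + r)" p] by (simp add: algebra_simps)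

lemma tendsto_const_div_linear:
  fixes a b c :: real
  assumes "a > 0"
  shows "(\<lambda>m. c / (a * real m + b)) \<longlonglongrightarrow> 0"
proof (rule tendsto_divide_0[OF tendsto_const])
  have "filterlim (\<lambda>m. b + a * real m) at_top sequentially"
    by (intro filterlim_tendsto_add_at_top[OF tendsto_const] filterlim_tendsto_pos_mult_at_top[OF tendsto_const]
        assms filterlim_real_sequentially)
  then show "filterlim (\<lambda>m. a * real m + b) at_infinity sequentially"
    by (simp add: add.commute filterlim_at_top_imp_at_infinity)
qed

lemma sums_ungroup_nonneg:
  fixes f :: "nat \<Rightarrow> real"
  assumes nonneg: "\<And>n. 0 \<le> f n" and "0 < k" and lim: "(\<lambda>N. \<Sum>i<N * k. f i) \<longlonglongrightarrow> L"
  shows "f sums L"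
proof -
  have "incseq (\<lambda>N. \<Sum>i<N * k. f i)"
    by (intro incseq_SucI sum_mono2) (use nonneg in auto)
  have "(\<Sum>i<n. f i) \<le> L" for n
  proof -
    have "(\<Sum>i<n. f i) \<le> (\<Sum>i<n * k. f i)"
      by (rule sum_mono2) (use nonneg \<open>0 < k\<close> in auto)
    also have "\<dots> \<le> L"
      using incseq_le[OF \<open>incseq _\<close> lim] .
    finally show ?thesis .
  qed
  then have "summable f"
    by (rule summableI_nonneg_bounded[OF nonneg])
  then have "(\<lambda>N. \<Sum>i<N * k. f i) \<longlonglongrightarrow> suminf f"
    using sums_group[OF summable_sums \<open>0 < k\<close>] by (simp add: sums_def sum.nat_group)
  with lim have "suminf f = L"
    using LIMSEQ_unique by blast
  with \<open>summable f\<close> show ?thesis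
    using summable_sums by blast
qed

definition c0_term :: "nat \<Rightarrow> nat \<Rightarrow> real" where
  "c0_term p m = (\<Sum>j = 1..p - 1. (real p - 2 * real j) / (real p * real m + real j))"

lemma c0_term_sums: "c0_term p sums (pi * c0 1 p)"
proof -
  define f where
    "f j m = - (real j / real p) * (1 / (real m + real j / real p) - 1 / (real m + 1 - real j / real p))"
    for j m :: nat
  have "f j sums (- (real j / real p) * (pi * cot (pi * (real j / real p))))" if "j \<in> {1..p - 1}" for j
  proof -
    have "0 < real j / real p" "real j / real p < 1"
      using that by (auto simp: field_simps)
    then have "real j / real p \<notin> \<int>"
      by (auto elim!: Ints_cases)
    from sums_mult[OF pi_cot_partial_fractions[OF this]] show ?thesis
      unfolding f_def .
  qed
  then have "(\<lambda>m. \<Sum>j = 1..p - 1. f j m) sums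
      (\<Sum>j = 1..p - 1. - (real j / real p) * (pi * cot (pi * (real j / real p))))"
    by (rule sums_sum)
  also have "(\<Sum>j = 1..p - 1. - (real j / real p) * (pi * cot (pi * (real j / real p)))) = pi * c0 1 p"
    by (simp add: c0_def sum_distrib_left sum_negf mult_ac)
  also have "(\<lambda>m. \<Sum>j = 1..p - 1. f j m) = c0_term p"
  proof
    fix m
    have "f j m = real j / (real p * real m + real (p - j)) - real j / (real p * real m + real j)"
      if "j \<in> {1..p - 1}" for j
    proof -
      have "real p > 0" "j \<le> p"
        using that by auto
      then have "real m + real j / real p = (real p * real m + real j) / real p"
        "real m + 1 - real j / real p = (real p * real m + real (p - j)) / real p"
        by (simp_all add: field_simps)
      with \<open>real p > 0\<close> show ?thesis
        by (simp add: f_def right_diff_distrib)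
    qed
    then have "(\<Sum>j = 1..p - 1. f j m) =
        (\<Sum>j = 1..p - 1. real j / (real p * real m + real (p - j)))
          - (\<Sum>j = 1..p - 1. real j / (real p * real m + real j))"
      by (simp add: sum_subtractf)
    also have "(\<Sum>j = 1..p - 1. real j / (real p * real m + real (p - j))) =
        (\<Sum>j = 1..p - 1. real (p - j) / (real p * real m + real j))"
      by (subst sum.atLeastAtMost_rev) (auto intro!: sum.cong)
    finally show "(\<Sum>j = 1..p - 1. f j m) = c0_term p m"
      by (auto simp: c0_term_def sum_subtractf[symmetric] diff_divide_distrib intro!: sum.cong)
  qed
  finally show ?thesis .
qed

definition block_harmonic :: "nat \<Rightarrow> nat \<Rightarrow> real" where
  "block_harmonic p n = (\<Sum>r<p. 1 / real (n + r + 1))"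

lemma block_sum_partial_fractions:
  "(\<Sum>r<p. a / real (n + r + 1) + b / real (n + r + 2) + c / real (n + r + p) + d / real (n + r + p + 1)) =
    (a + b) * block_harmonic p n + (c + d) * block_harmonic p (n + p)
    + b * (1 / real (n + p + 1) - 1 / real (n + 1)) + c * (1 / real (n + p) - 1 / real (n + 2 * p))"
proof -
  have "(\<Sum>r<p. a / real (n + r + 1) + b / real (n + r + 2) + c / real (n + r + p) + d / real (n + r + p + 1)) =
      a * block_harmonic p n + b * (\<Sum>r<p. 1 / real (n + r + 2))
      + c * (\<Sum>r<p. 1 / real (n + r + p)) + d * (\<Sum>r<p. 1 / real (n + r + p + 1))"
    by (simp add: block_harmonic_def sum.distrib sum_distrib_left)
  also have "(\<Sum>r<p. 1 / real (n + r + 2)) = block_harmonic p n - 1 / real (n + 1) + 1 / real (n + p + 1)"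
    using sum_lessThan_shift[of "\<lambda>i. 1 / real (i + 1)" n] by (simp add: block_harmonic_def ac_simps)
  also have "(\<Sum>r<p. 1 / real (n + r + p)) = block_harmonic p (n + p) + 1 / real (n + p) - 1 / real (n + 2 * p)"
    using sum_lessThan_shift[of "\<lambda>i. 1 / real i" "n + p"] by (simp add: block_harmonic_def ac_simps mult_2)
  also have "(\<Sum>r<p. 1 / real (n + r + p + 1)) = block_harmonic p (n + p)"
    by (simp add: block_harmonic_def ac_simps)
  finally show ?thesis
    by (simp add: algebra_simps)
qed

lemma c0_term_eq_block_harmonic:
  assumes "p > 0"
  shows "c0_term p m = real p * (2 * real m + 1) * block_harmonic p (p * m) - 2 * real p + 1 / (real m + 1)"
proof -
  let ?g = "\<lambda>j. (real p - 2 * real j) / (real p * real m + real j)"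
  obtain q where q: "p = Suc q"
    using assms not0_implies_Suc by blast
  have "?g p = - real p / (real p * (real m + 1))"
    by (simp add: algebra_simps)
  also have "\<dots> = - 1 / (real m + 1)"
    using assms by simp
  finally have "?g p = - 1 / (real m + 1)" .
  moreover have "(\<Sum>j = 1..p. ?g j) = c0_term p m + ?g p"
    using q by (simp add: c0_term_def)
  ultimately have "(\<Sum>j = 1..p. ?g j) = c0_term p m - 1 / (real m + 1)"
    by simp
  moreover have "?g j = real p * (2 * real m + 1) * (1 / (real p * real m + real j)) - 2" if "j \<ge> 1" for j
  proof -
    have "real p * real m + real j > 0"
      using that by (simp add: add_nonneg_pos)
    then show ?thesis
      by (simp add: field_simps)
  qed
  then have "(\<Sum>j = 1..p. ?g j) =
      real p * (2 * real m + 1) * (\<Sum>j = 1..p. 1 / (real p * real m + real j)) - 2 * real p"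
    by (simp add: sum_subtractf sum_distrib_left)
  moreover have "(\<Sum>j = 1..p. 1 / (real p * real m + real j)) = block_harmonic p (p * m)"
    by (simp add: block_harmonic_def sum.atLeast1_atMost_eq ac_simps)
  ultimately show ?thesis
    by simp
qed

definition c0_summand :: "nat \<Rightarrow> nat \<Rightarrow> real" where
  "c0_summand p k = ((real k + 1 - (real p / 2) * real (k div p)) * (real (k div p) + 1)) /
     ((real k + 1) * (real k + real p + 1) * (real k + 2) * (real k + real p))"

lemma summand_partial_fractions:
  fixes P M x :: real
  assumes "x + 1 \<noteq> 0" "x + 2 \<noteq> 0" "x + P \<noteq> 0" "x + P + 1 \<noteq> 0"
  shows "P * (P - 1) * (P - 2) * (((x + 1 - (P / 2) * M) * (M + 1)) / ((x + 1) * (x + P + 1) * (x + 2) * (x + P))) =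
    P * (2 - P) * M * (M + 1) / 2 / (x + 1) + P * (M + 1) * (P * M + 2) / 2 / (x + 2)
    + P * (M + 1) * (2 - 2 * P - P * M) / 2 / (x + P) + P * (P - 2) * (M + 1) * (M + 2) / 2 / (x + P + 1)"
  using assms by (simp add: divide_simps) algebra

lemma c0_summand_block_partial_fractions:
  fixes p m r :: nat
  defines "P \<equiv> real p" and "M \<equiv> real m"
  assumes "r < p"
  shows "P * (P - 1) * (P - 2) * c0_summand p (p * m + r) =
    P * (2 - P) * M * (M + 1) / 2 / real (p * m + r + 1) + P * (M + 1) * (P * M + 2) / 2 / real (p * m + r + 2)
    + P * (M + 1) * (2 - 2 * P - P * M) / 2 / real (p * m + r + p)
    + P * (P - 2) * (M + 1) * (M + 2) / 2 / real (p * m + r + p + 1)"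
proof -
  define x where "x = real (p * m + r)"
  have "x \<ge> 0" "P > 0"
    using assms by (simp_all add: x_def P_def)
  have "(p * m + r) div p = m"
    using assms by simp
  then have "c0_summand p (p * m + r) =
      ((x + 1 - (P / 2) * M) * (M + 1)) / ((x + 1) * (x + P + 1) * (x + 2) * (x + P))"
    unfolding c0_summand_def x_def P_def M_def by simp
  moreover have "real (p * m + r + 1) = x + 1" "real (p * m + r + 2) = x + 2"
    "real (p * m + r + p) = x + P" "real (p * m + r + p + 1) = x + P + 1"
    by (simp_all add: x_def P_def)
  ultimately show ?thesis
    using summand_partial_fractions[of x P M] \<open>x \<ge> 0\<close> \<open>P > 0\<close> by (simp only:)
qed

lemma c0_summand_nonneg: "0 \<le> c0_summand p k"
proof -
  have "real p * real (k div p) \<le> real k"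
    by (metis of_nat_le_iff of_nat_mult times_div_less_eq_dividend)
  then have "0 \<le> real k + 1 - (real p / 2) * real (k div p)"
    by simp
  then show ?thesis
    unfolding c0_summand_def by (intro divide_nonneg_nonneg mult_nonneg_nonneg) auto
qed

text \<open>
  Summed over block m, the partial fractions give p (m + 1)^2 times the difference of the
  harmonic sums over blocks m and m + 1, plus boundary terms. Splitting
  p (m + 1)^2 = p (2m + 1) + p m^2 (summation by parts), the first part yields c0_term, while the
  second part and the boundary terms telescope through the following term.
\<close>
definition telescoping_term :: "nat \<Rightarrow> nat \<Rightarrow> real" where
  "telescoping_term p m = real p * (real m)\<^sup>2 * block_harmonic p (p * m) - real p * real m
     - (real p - 1) / (2 * (real p * real m + 1)) - 1 / (real m + 1)"

lemma block_sum_c0_summand: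
  assumes "p > 0"
  shows "(\<Sum>r<p. real p * (real p - 1) * (real p - 2) * c0_summand p (p * m + r)) =
    c0_term p m + telescoping_term p m - telescoping_term p (Suc m)"
proof -
  define P M where "P = real p" and "M = real m"
  define a b c d where
    "a = P * (2 - P) * M * (M + 1) / 2" and "b = P * (M + 1) * (P * M + 2) / 2" and
    "c = P * (M + 1) * (2 - 2 * P - P * M) / 2" and "d = P * (P - 2) * (M + 1) * (M + 2) / 2"
  have P: "P > 0" and M: "M \<ge> 0"
    using assms by (simp_all add: P_def M_def)
  have "real p * (real p - 1) * (real p - 2) * c0_summand p (p * m + r) =
      a / real (p * m + r + 1) + b / real (p * m + r + 2) + c / real (p * m + r + p) + d / real (p * m + r + p + 1)"
    if "r < p" for r
    using c0_summand_block_partial_fractions[OF that] unfolding a_def b_def c_def d_def P_def M_def .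
  then have "(\<Sum>r<p. real p * (real p - 1) * (real p - 2) * c0_summand p (p * m + r)) =
      (\<Sum>r<p. a / real (p * m + r + 1) + b / real (p * m + r + 2)
        + c / real (p * m + r + p) + d / real (p * m + r + p + 1))"
    by (intro sum.cong) simp_all
  also have "\<dots> = (a + b) * block_harmonic p (p * m) + (c + d) * block_harmonic p (p * m + p)
      + b * (1 / real (p * m + p + 1) - 1 / real (p * m + 1)) + c * (1 / real (p * m + p) - 1 / real (p * m + 2 * p))"
    by (rule block_sum_partial_fractions)
  also have "\<dots> = P * (M + 1)\<^sup>2 * block_harmonic p (p * m) - P * (M + 1)\<^sup>2 * block_harmonic p (p * Suc m)
      + (- P / 2 - (P - 1) / (2 * (P * M + 1)) + (P - 1) / (2 * (P * M + P + 1))) + (1 / (M + 2) - P / 2)"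
  proof -
    have pos: "P * M + 1 > 0" "P * M + P + 1 > 0" "P * M + P > 0" "P * M + 2 * P > 0" "M + 2 > 0"
      using P M by (simp_all add: add_nonneg_pos add_pos_pos)
    have "b * (1 / (P * M + P + 1) - 1 / (P * M + 1)) =
        - P / 2 - (P - 1) / (2 * (P * M + 1)) + (P - 1) / (2 * (P * M + P + 1))"
      using pos unfolding b_def by (simp add: divide_simps) algebra
    moreover have "c * (1 / (P * M + P) - 1 / (P * M + 2 * P)) = 1 / (M + 2) - P / 2"
      using pos unfolding c_def by (simp add: divide_simps) algebra
    moreover have "a + b = P * (M + 1)\<^sup>2" "c + d = - P * (M + 1)\<^sup>2"
      unfolding a_def b_def c_def d_def by (simp_all add: field_simps power2_eq_square)
    moreover have "p * m + p = p * Suc m" "real (p * m + p + 1) = P * M + P + 1" "real (p * m + 1) = P * M + 1"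
      "real (p * m + p) = P * M + P" "real (p * m + 2 * p) = P * M + 2 * P"
      by (simp_all add: P_def M_def)
    ultimately show ?thesis
      by (simp only:)
  qed
  also have "\<dots> = c0_term p m + telescoping_term p m - telescoping_term p (Suc m)"
    unfolding c0_term_eq_block_harmonic[OF assms] telescoping_term_def P_def M_def
    by (simp add: algebra_simps power2_eq_square)
  finally show ?thesis .
qed

lemma telescoping_term_tendsto:
  assumes "p > 0"
  shows "telescoping_term p \<longlonglongrightarrow> telescoping_term p 0"
proof -
  define P where "P = real p"
  have P: "P > 0"
    using assms by (simp add: P_def)
  have T_eq: "telescoping_term p m = (\<Sum>r<p. ((real r + 1)\<^sup>2 / P) / (P * real m + (real r + 1)))
      - (\<Sum>r<p. (real r + 1) / P) - ((P - 1) / 2) / (P * real m + 1) - 1 / (1 * real m + 1)" for m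
  proof -
    have "P * (real m)\<^sup>2 * block_harmonic p (p * m) - P * real m =
        (\<Sum>r<p. P * (real m)\<^sup>2 / (P * real m + (real r + 1)) - real m)"
      by (simp add: block_harmonic_def sum_distrib_left sum_subtractf P_def add_ac)
    also have "\<dots> = (\<Sum>r<p. ((real r + 1)\<^sup>2 / P) / (P * real m + (real r + 1)) - (real r + 1) / P)"
    proof (rule sum.cong)
      fix r
      have "P * real m + (real r + 1) > 0"
        using P by (simp add: add_nonneg_pos)
      with P show "P * (real m)\<^sup>2 / (P * real m + (real r + 1)) - real m =
          ((real r + 1)\<^sup>2 / P) / (P * real m + (real r + 1)) - (real r + 1) / P"
        by (simp add: divide_simps power2_eq_square) algebra
    qed simp
    finally show ?thesis
      by (simp add: telescoping_term_def sum_subtractf P_def)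
  qed
  have "telescoping_term p \<longlonglongrightarrow> 0 - (\<Sum>r<p. (real r + 1) / P) - 0 - 0"
    unfolding T_eq using P
    by (intro tendsto_diff tendsto_null_sum tendsto_const tendsto_const_div_linear) simp_all
  moreover have "telescoping_term p 0 = 0 - (\<Sum>r<p. (real r + 1) / P) - 0 - 0"
  proof -
    have "(\<Sum>r<n. real r + 1) = real n * (real n + 1) / 2" for n
      by (induction n) (simp_all add: field_simps)
    with P show ?thesis
      by (simp add: telescoping_term_def P_def field_simps flip: sum_divide_distrib)
  qed
  ultimately show ?thesis
    by simp
qed

lemma sum_c0_summand_blocks:
  assumes "p > 0"
  shows "(\<Sum>k<N * p. real p * (real p - 1) * (real p - 2) * c0_summand p k) =
    (\<Sum>m<N. c0_term p m) + telescoping_term p 0 - telescoping_term p N"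
proof -
  have "(\<Sum>k<N * p. real p * (real p - 1) * (real p - 2) * c0_summand p k) =
      (\<Sum>m<N. \<Sum>r<p. real p * (real p - 1) * (real p - 2) * c0_summand p (p * m + r))"
  proof -
    have "sum f {m * p..<m * p + p} = (\<Sum>r<p. f (p * m + r))" for f :: "nat \<Rightarrow> real" and m
      using sum.shift_bounds_nat_ivl[of f 0 "m * p" p] by (simp add: atLeast0LessThan ac_simps)
    then show ?thesis
      by (simp add: sum.nat_group[symmetric])
  qed
  also have "\<dots> = (\<Sum>m<N. c0_term p m + telescoping_term p m - telescoping_term p (Suc m))"
    by (simp add: block_sum_c0_summand[OF assms])
  also have "\<dots> = (\<Sum>m<N. c0_term p m) + telescoping_term p 0 - telescoping_term p N"
    unfolding add_diff_eq[symmetric] sum.distrib sum_lessThan_telescope' ..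
  finally show ?thesis .
qed

theorem theorem1:
  fixes p :: nat
  assumes "p \<ge> 2"
  shows "(\<lambda>k::nat. (real p * (real p - 1) * (real p - 2) / pi) *
            (((real k + 1 - (real p / 2) * real (k div p)) * (real (k div p) + 1)) /
             ((real k + 1) * (real k + real p + 1) * (real k + 2) * (real k + real p))))
         sums c0 1 p"
proof -
  define K where "K = real p * (real p - 1) * (real p - 2)"
  have "p > 0" "K \<ge> 0"
    using assms by (simp_all add: K_def)
  have "(\<lambda>N. (\<Sum>m<N. c0_term p m) + telescoping_term p 0 - telescoping_term p N)
      \<longlonglongrightarrow> pi * c0 1 p + telescoping_term p 0 - telescoping_term p 0"
    using c0_term_sums telescoping_term_tendsto[OF \<open>p > 0\<close>]
    by (intro tendsto_intros) (simp_all add: sums_def)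
  then have "(\<lambda>N. \<Sum>k<N * p. K * c0_summand p k) \<longlonglongrightarrow> pi * c0 1 p"
    by (simp add: K_def sum_c0_summand_blocks[OF \<open>p > 0\<close>])
  then have "(\<lambda>k. K * c0_summand p k) sums (pi * c0 1 p)"
    using \<open>K \<ge> 0\<close> \<open>p > 0\<close> by (intro sums_ungroup_nonneg c0_summand_nonneg mult_nonneg_nonneg)
  from sums_divide[OF this, of pi] show ?thesis
    by (simp add: K_def c0_summand_def ac_simps)
qed

end
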